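(* For every network $\mathcal N$, the rate region $\mathcal R^{\mathcal N}$ is a convex set.
   Context: A network is a triple $\mathcal N=(\mathcal L,\mathcal I,D_{\mathcal L})$ where $\mathcal L$ is a finite nonempty set (of links); $\mathcal I=(\mathcal I(l))_{l\in\mathcal L}$ is the collision profile, each $\mathcal I(l)$ being a collection of nonempty subsets of $\mathcal L$; and $D_{\mathcal L}$ assigns an integer $D_{\mathcal L}(l,l')$ to every pair $(l,l')$ with $l'\in\phi$ for some $\phi\in\mathcal I(l)$. A schedule is a map $S:\mathcal L\times\mathbb Z\to\{0,1\}$. $S(l,t)$ has a collision if there exists $\phi\in\mathcal I(l)$ such that $S(l',t+D_{\mathcal L}(l,l'))=1$ for every $l'\in\phi$; otherwise it is collision free. For a schedule $S$ and link $l$, $R_S(l)=\lim_{T\to\infty}\frac1T\sum_{t=0}^{T-1}\iota\big(S(l,t)=1\text{ and }S(l,t)\text{ is collision free}\big)$ when the limit exists; if it exists for all $l$, $R_S=(R_S(l))_{l}$ is the rate vector of $S$. Comparisons $\succcurlyeq$ are entrywise and $R-\epsilon$ subtracts $\epsilon$ from each entry. A nonnegative vector $R\in[0,\infty)^{\mathcal L}$ is achievable if for every $\epsilon>0$ there is a schedule $S$ whose rate vector exists and satisfies $R_S\succcurlyeq R-\epsilon$; the rate region $\mathcal R^{\mathcal N}$ is the set of all achievable nonnegative vectors. *)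

theory Defs
  imports "HOL-Analysis.Analysis"
begin

(* Links: a finite (nonempty, automatically) type 'l, i.e. the link set L = UNIV.
   Collision profile  I :: 'l => 'l set set,  delay map  D :: 'l => 'l => int
   (only its values D l l' for l' in some phi in I l matter).
   Schedules: S :: 'l => int => bool  (S l t = True  means  S(l,t) = 1). *)

definition network :: "('l::finite \<Rightarrow> 'l set set) \<Rightarrow> bool" where
  "network I \<longleftrightarrow> (\<forall>l. \<forall>\<phi>\<in>I l. \<phi> \<noteq> {})"

definition collision ::
  "('l \<Rightarrow> 'l set set) \<Rightarrow> ('l \<Rightarrow> 'l \<Rightarrow> int) \<Rightarrow> ('l \<Rightarrow> int \<Rightarrow> bool) \<Rightarrow> 'l \<Rightarrow> int \<Rightarrow> bool" where
  "collision I D S l t \<longleftrightarrow> (\<exists>\<phi>\<in>I l. \<forall>l'\<in>\<phi>. S l' (t + D l l'))"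

definition avg_success ::
  "('l \<Rightarrow> 'l set set) \<Rightarrow> ('l \<Rightarrow> 'l \<Rightarrow> int) \<Rightarrow> ('l \<Rightarrow> int \<Rightarrow> bool) \<Rightarrow> 'l \<Rightarrow> nat \<Rightarrow> real" where
  "avg_success I D S l T =
     (1 / real T) * real (card {t::nat. t < T \<and> S l (int t) \<and> \<not> collision I D S l (int t)})"

definition rate_exists ::
  "('l \<Rightarrow> 'l set set) \<Rightarrow> ('l \<Rightarrow> 'l \<Rightarrow> int) \<Rightarrow> ('l \<Rightarrow> int \<Rightarrow> bool) \<Rightarrow> bool" where
  "rate_exists I D S \<longleftrightarrow> (\<forall>l. convergent (avg_success I D S l))"

(* the rate vector R_S (meaningful when rate_exists holds) *)
definition rate_vector ::
  "('l::finite \<Rightarrow> 'l set set) \<Rightarrow> ('l \<Rightarrow> 'l \<Rightarrow> int) \<Rightarrow> ('l \<Rightarrow> int \<Rightarrow> bool) \<Rightarrow> real ^ 'l" where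
  "rate_vector I D S = (\<chi> l. lim (avg_success I D S l))"

definition achievable ::
  "('l::finite \<Rightarrow> 'l set set) \<Rightarrow> ('l \<Rightarrow> 'l \<Rightarrow> int) \<Rightarrow> real ^ 'l \<Rightarrow> bool" where
  "achievable I D R \<longleftrightarrow> (\<forall>l. R $ l \<ge> 0) \<and>
     (\<forall>\<epsilon>>0. \<exists>S. rate_exists I D S \<and> (\<forall>l. rate_vector I D S $ l \<ge> R $ l - \<epsilon>))"

definition rate_region ::
  "('l::finite \<Rightarrow> 'l set set) \<Rightarrow> ('l \<Rightarrow> 'l \<Rightarrow> int) \<Rightarrow> (real ^ 'l) set" where
  "rate_region I D = {R. achievable I D R}"

end

theory Submission
  imports Defs
begin

text \<open>Given schedules that nearly achieve rate vectors R1 and R2, run the first for A slots,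
  stay silent for G slots, run the second for B slots, stay silent for G more slots, and repeat
  with period A + B + 2G. If G bounds all delays, the collision test of a slot in a block only
  looks at slots of that block or of the adjacent idle gaps, so every success of the original
  schedules stays a success. The resulting periodic schedule has a rate, at least (A R1 + B R2) / (A + B + 2G)
  up to constants, and taking A : B close to u : v with A + B large gives u R1 + v R2.\<close>

lemma card_less_add_split:
  "card {t::nat. t < P + T \<and> h t} = card {t. t < P \<and> h t} + card {t. t < T \<and> h (t + P)}"
proof -
  have split: "{t. t < P + T \<and> h t} = {t. t < P \<and> h t} \<union> (\<lambda>t. t + P) ` {t. t < T \<and> h (t + P)}"
    by (auto simp: image_iff) (metis add.commute less_diff_conv2 not_less le_add_diff_inverse2)
  have "card ({t. t < P \<and> h t} \<union> (\<lambda>t. t + P) ` {t. t < T \<and> h (t + P)})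
      = card {t. t < P \<and> h t} + card ((\<lambda>t. t + P) ` {t. t < T \<and> h (t + P)})"
    by (rule card_Un_disjoint) auto
  also have "card ((\<lambda>t. t + P) ` {t. t < T \<and> h (t + P)}) = card {t. t < T \<and> h (t + P)}"
    by (rule card_image) (auto simp: inj_on_def)
  finally show ?thesis using split by simp
qed

lemma card_less_periodic:
  assumes "\<And>t. h (t + P) = h t"
  shows "card {t::nat. t < q * P + r \<and> h t} = q * card {t. t < P \<and> h t} + card {t. t < r \<and> h t}"
proof (induction q)
  case (Suc q)
  have "card {t. t < Suc q * P + r \<and> h t} = card {t. t < P + (q * P + r) \<and> h t}"
    by (simp add: add.assoc)
  also have "\<dots> = card {t. t < P \<and> h t} + card {t. t < q * P + r \<and> h t}"
    by (simp only: card_less_add_split assms)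
  finally show ?case using Suc by simp
qed simp

lemma card_less_le: "card {t::nat. t < r \<and> h t} \<le> r"
  using card_mono[of "{..<r}" "{t. t < r \<and> h t}"] by auto

lemma card_less_periodic_deviation:
  assumes "P > 0" and "\<And>t. h (t + P) = h t"
  shows "\<bar>real (card {t::nat. t < T \<and> h t}) - real T * card {t. t < P \<and> h t} / P\<bar> \<le> P"
proof -
  define c where "c = card {t. t < P \<and> h t}"
  define r where "r = T mod P"
  have T: "T = (T div P) * P + r" by (simp add: r_def)
  have count: "card {t. t < T \<and> h t} = (T div P) * c + card {t. t < r \<and> h t}"
    using card_less_periodic[where h=h and P=P and q="T div P" and r=r, OF assms(2)] T
    by (simp add: c_def)
  have "real T * c / P = (T div P) * c + r * (c / P)"
    using assms(1) by (subst T) (simp add: field_simps)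
  moreover have "r * (c / P) \<le> r"
    using card_less_le[of P h] assms(1) by (intro mult_left_le) (auto simp: c_def)
  moreover have "real (card {t. t < r \<and> h t}) \<le> r" using card_less_le by simp
  moreover have "real r < P" using assms(1) by (simp add: r_def)
  moreover have "0 \<le> r * (c / P)" by simp
  ultimately show ?thesis
    unfolding count c_def[symmetric] abs_le_iff of_nat_add of_nat_mult by linarith
qed

lemma periodic_density_tendsto:
  assumes "P > 0" and "\<And>t. h (t + P) = h t"
  shows "(\<lambda>T. real (card {t::nat. t < T \<and> h t}) / T) \<longlonglongrightarrow> real (card {t. t < P \<and> h t}) / P"
proof -
  define c where "c = real (card {t. t < P \<and> h t}) / P"
  have "norm (real (card {t. t < T \<and> h t}) / real T - c) \<le> real P / real T" if "T > 0" for T :: nat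
  proof -
    have "real (card {t. t < T \<and> h t}) / T - c = (real (card {t. t < T \<and> h t}) - T * c) / T"
      using that by (simp add: field_simps)
    then show ?thesis
      using card_less_periodic_deviation[where h=h and P=P and T=T, OF assms] that
      by (simp add: c_def abs_divide divide_right_mono)
  qed
  then have "(\<lambda>T. real (card {t. t < T \<and> h t}) / T - c) \<longlonglongrightarrow> 0"
    by (intro Lim_null_comparison[where g="\<lambda>T. real P / real T", OF _ lim_const_over_n])
      (auto simp: eventually_sequentially intro!: exI[of _ 1])
  then show ?thesis unfolding c_def by (rule LIM_zero_cancel)
qed

definition success_count ::
  "('l \<Rightarrow> 'l set set) \<Rightarrow> ('l \<Rightarrow> 'l \<Rightarrow> int) \<Rightarrow> ('l \<Rightarrow> int \<Rightarrow> bool) \<Rightarrow> 'l \<Rightarrow> nat \<Rightarrow> nat" where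
  "success_count I D S l T = card {t::nat. t < T \<and> S l (int t) \<and> \<not> collision I D S l (int t)}"

lemma avg_success_eq_success_count:
  "avg_success I D S l T = real (success_count I D S l T) / real T"
  by (simp add: avg_success_def success_count_def)

lemma collision_periodic:
  assumes "\<And>l t. S l (t + p) = S l t"
  shows "collision I D S l (t + p) \<longleftrightarrow> collision I D S l t"
proof -
  have "S l' (t + p + d) = S l' (t + d)" for l' d
    using assms[of l' "t + d"] by (simp add: ac_simps)
  then show ?thesis by (simp add: collision_def)
qed

lemma periodic_schedule_avg_success_tendsto:
  assumes "P > 0" and "\<And>l t. S l (t + int P) = S l t"
  shows "avg_success I D S l \<longlonglongrightarrow> real (success_count I D S l P) / P"
proof -
  define h where "h t \<longleftrightarrow> S l (int t) \<and> \<not> collision I D S l (int t)" for t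
  have "h (t + P) = h t" for t
    using assms(2) collision_periodic[of S "int P", OF assms(2)] by (simp add: h_def)
  moreover have "avg_success I D S l = (\<lambda>T. real (card {t. t < T \<and> h t}) / T)"
    by (simp add: fun_eq_iff avg_success_eq_success_count success_count_def h_def)
  ultimately show ?thesis
    using periodic_density_tendsto[where h=h, OF assms(1)] by (simp add: success_count_def h_def)
qed

lemma collision_free_transfer:
  assumes "\<not> collision I D S l s"
    and "\<And>l'. S' l' (t + D l l') \<Longrightarrow> S l' (s + D l l')"
  shows "\<not> collision I D S' l t"
  using assms by (auto simp: collision_def)

definition time_share ::
  "('l \<Rightarrow> int \<Rightarrow> bool) \<Rightarrow> ('l \<Rightarrow> int \<Rightarrow> bool) \<Rightarrow> nat \<Rightarrow> nat \<Rightarrow> nat \<Rightarrow> 'l \<Rightarrow> int \<Rightarrow> bool" where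
  "time_share S1 S2 A B G l t =
    (let s = t mod int (A + B + 2 * G)
     in (0 \<le> s \<and> s < int A \<and> S1 l s) \<or> (int (A + G) \<le> s \<and> s < int (A + G + B) \<and> S2 l (s - int (A + G))))"

lemma time_share_periodic:
  "time_share S1 S2 A B G l (t + int (A + B + 2 * G)) = time_share S1 S2 A B G l t"
  by (simp add: time_share_def)

lemma time_share_first_window:
  assumes "s < A" "\<bar>d\<bar> \<le> int G" "time_share S1 S2 A B G l (int s + d)"
  shows "S1 l (int s + d)"
proof (cases "int s + d < 0")
  case True
  have "(int s + d) mod int (A + B + 2 * G)
      = (int s + d + int (A + B + 2 * G)) mod int (A + B + 2 * G)"
    by simp
  also have "\<dots> = int s + d + int (A + B + 2 * G)"
    using True assms(1,2) by (intro mod_pos_pos_trivial) auto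
  finally have "(int s + d) mod int (A + B + 2 * G) = int s + d + int (A + B + 2 * G)" .
  with True assms show ?thesis by (auto simp: time_share_def Let_def)
qed (use assms in \<open>auto simp: time_share_def Let_def mod_pos_pos_trivial\<close>)

lemma time_share_second_window:
  assumes "s < B" "\<bar>d\<bar> \<le> int G" "time_share S1 S2 A B G l (int (A + G + s) + d)"
  shows "S2 l (int s + d)"
proof -
  have "(int (A + G + s) + d) mod int (A + B + 2 * G) = int (A + G + s) + d"
    using assms(1,2) by (intro mod_pos_pos_trivial) auto
  with assms show ?thesis by (auto simp: time_share_def Let_def)
qed

lemma success_count_time_share:
  assumes delay: "\<And>l l'. \<bar>D l l'\<bar> \<le> int G"
  shows "success_count I D S1 l A + success_count I D S2 l B
    \<le> success_count I D (time_share S1 S2 A B G) l (A + B + 2 * G)"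
proof -
  let ?S = "time_share S1 S2 A B G"
  define succ where
    "succ S T = {t::nat. t < T \<and> S l (int t) \<and> \<not> collision I D S l (int t)}" for S T
  have first: "succ S1 A \<subseteq> succ ?S (A + B + 2 * G)"
  proof
    fix t assume "t \<in> succ S1 A"
    then have t: "t < A" "S1 l (int t)" "\<not> collision I D S1 l (int t)"
      by (simp_all add: succ_def)
    have "int t mod int (A + B + 2 * G) = int t" using t(1) by (intro mod_pos_pos_trivial) auto
    then have "?S l (int t)" using t by (simp add: time_share_def)
    moreover have "\<not> collision I D ?S l (int t)"
      using t(3) time_share_first_window[OF t(1) delay] by (rule collision_free_transfer)
    ultimately show "t \<in> succ ?S (A + B + 2 * G)" using t(1) by (simp add: succ_def)
  qed
  have second: "(+) (A + G) ` succ S2 B \<subseteq> succ ?S (A + B + 2 * G)"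
  proof
    fix t' assume "t' \<in> (+) (A + G) ` succ S2 B"
    then obtain t where t': "t' = A + G + t" and "t \<in> succ S2 B" by blast
    then have t: "t < B" "S2 l (int t)" "\<not> collision I D S2 l (int t)"
      by (simp_all add: succ_def)
    have "int t' mod int (A + B + 2 * G) = int (A + G + t)"
      using t(1) unfolding t' by (intro mod_pos_pos_trivial) auto
    then have "?S l (int t')" using t by (simp add: time_share_def t')
    moreover have "\<not> collision I D ?S l (int t')"
      using t(3) time_share_second_window[OF t(1) delay] unfolding t' by (rule collision_free_transfer)
    ultimately show "t' \<in> succ ?S (A + B + 2 * G)" using t(1) by (simp add: t' succ_def)
  qed
  have "card (succ S1 A) + card (succ S2 B) = card (succ S1 A \<union> (+) (A + G) ` succ S2 B)"
    by (subst card_Un_disjoint) (auto simp: succ_def card_image)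
  also have "\<dots> \<le> card (succ ?S (A + B + 2 * G))"
    using first second by (intro card_mono) (auto simp: succ_def)
  finally show ?thesis by (simp add: success_count_def succ_def)
qed

lemma success_count_linear_lower_bound:
  assumes "avg_success I D S l \<longlonglongrightarrow> \<rho>" and "c < \<rho>"
  obtains K where "\<And>T. real T * c - K \<le> real (success_count I D S l T)"
proof -
  obtain N0 where N0: "\<And>T. T \<ge> N0 \<Longrightarrow> c < avg_success I D S l T"
    using order_tendstoD(1)[OF assms] unfolding eventually_sequentially by blast
  have "real T * c - real N0 * \<bar>c\<bar> \<le> real (success_count I D S l T)" for T
  proof (cases "T \<ge> N0 \<and> T > 0")
    case True
    then have "real T * c \<le> real (success_count I D S l T)"
      using N0[of T] by (simp add: avg_success_eq_success_count pos_less_divide_eq mult.commute)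
    moreover have "0 \<le> real N0 * \<bar>c\<bar>" by simp
    ultimately show ?thesis by linarith
  next
    case False
    then have "T \<le> N0" by auto
    then have "real T * \<bar>c\<bar> \<le> real N0 * \<bar>c\<bar>" by (simp add: mult_right_mono)
    moreover have "real T * c \<le> real T * \<bar>c\<bar>" by (simp add: mult_left_mono)
    ultimately show ?thesis by simp
  qed
  then show ?thesis by (rule that)
qed

lemma rate_exists_linear_lower_bound:
  assumes "rate_exists I D S" and "\<And>l. c l < rate_vector I D S $ l"
  obtains K where "\<And>l T. real T * c l - K l \<le> real (success_count I D S l T)"
proof -
  have "\<exists>K. \<forall>T. real T * c l - K \<le> real (success_count I D S l T)" for l
  proof -
    have "avg_success I D S l \<longlonglongrightarrow> rate_vector I D S $ l"
      using assms(1) by (simp add: rate_exists_def rate_vector_def convergent_LIMSEQ_iff)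
    from success_count_linear_lower_bound[OF this assms(2)] show ?thesis by blast
  qed
  then show ?thesis using that by metis
qed

lemma finite_delays_bounded:
  fixes D :: "'l::finite \<Rightarrow> 'l \<Rightarrow> int"
  obtains G :: nat where "\<And>l l'. \<bar>D l l'\<bar> \<le> int G"
proof
  fix l l'
  have "\<bar>D l l'\<bar> \<le> Max (range (\<lambda>(l, l'). \<bar>D l l'\<bar>))"
    by (rule Max_ge) auto
  then show "\<bar>D l l'\<bar> \<le> int (nat (Max (range (\<lambda>(l, l'). \<bar>D l l'\<bar>))))" by linarith
qed

lemma floor_mult_nat_approx:
  fixes u :: real
  assumes "0 \<le> u" "u \<le> 1"
  shows "nat \<lfloor>u * N\<rfloor> \<le> N" and "\<bar>real (nat \<lfloor>u * N\<rfloor>) - u * N\<bar> \<le> 1"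
    and "\<bar>real (N - nat \<lfloor>u * N\<rfloor>) - (1 - u) * N\<bar> \<le> 1"
proof -
  have "u * N \<le> N" using assms by (simp add: mult_left_le_one_le)
  then show le: "nat \<lfloor>u * N\<rfloor> \<le> N" by linarith
  have "real (nat \<lfloor>u * N\<rfloor>) = of_int \<lfloor>u * N\<rfloor>" using assms(1) by simp
  then show "\<bar>real (nat \<lfloor>u * N\<rfloor>) - u * N\<bar> \<le> 1"
    using of_int_floor_le[of "u * N"] real_of_int_floor_gt_diff_one[of "u * N"] by linarith
  then show "\<bar>real (N - nat \<lfloor>u * N\<rfloor>) - (1 - u) * N\<bar> \<le> 1"
    using le by (simp add: of_nat_diff algebra_simps)
qed

lemma mult_lower_bound_of_approx:
  fixes a x c :: real
  assumes "\<bar>a - x\<bar> \<le> 1"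
  shows "x * c - \<bar>c\<bar> \<le> a * c"
proof -
  have "\<bar>(a - x) * c\<bar> \<le> 1 * \<bar>c\<bar>" unfolding abs_mult using assms by (rule mult_right_mono) simp
  then show ?thesis by (simp add: algebra_simps abs_le_iff)
qed

lemma time_share_rate_lower_bound:
  fixes c1 c2 K1 K2 :: "'l::finite \<Rightarrow> real"
  assumes delay: "\<And>l l'. \<bar>D l l'\<bar> \<le> int G"
    and S1: "\<And>l T. real T * c1 l - K1 l \<le> real (success_count I D S1 l T)"
    and S2: "\<And>l T. real T * c2 l - K2 l \<le> real (success_count I D S2 l T)"
    and "0 \<le> u" "0 \<le> v" "u + v = 1" and "\<delta> > 0"
  obtains A B where "rate_exists I D (time_share S1 S2 A B G)"
    and "\<And>l. u * c1 l + v * c2 l - \<delta> \<le> rate_vector I D (time_share S1 S2 A B G) $ l"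
proof -
  define w where "w l = u * c1 l + v * c2 l" for l
  \<comment> \<open>E l absorbs the rounding of A and B, the constants K1 and K2 and the 2G idle slots.\<close>
  define E where "E l = \<bar>c1 l\<bar> + \<bar>c2 l\<bar> + K1 l + K2 l + 2 * G * \<bar>w l\<bar>" for l
  define N where "N = nat \<lceil>(\<Sum>l\<in>UNIV. \<bar>E l\<bar>) / \<delta>\<rceil> + 1"
  have E_le: "E l \<le> \<delta> * N" for l
  proof -
    have "E l \<le> (\<Sum>l\<in>UNIV. \<bar>E l\<bar>)"
      using member_le_sum[of l UNIV "\<lambda>l. \<bar>E l\<bar>"] by simp
    also have "\<dots> \<le> \<delta> * N"
    proof -
      have "(\<Sum>l\<in>UNIV. \<bar>E l\<bar>) / \<delta> \<le> N" unfolding N_def by linarith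
      then show ?thesis using \<open>\<delta> > 0\<close> by (simp add: pos_divide_le_eq mult.commute)
    qed
    finally show ?thesis .
  qed
  define A where "A = nat \<lfloor>u * N\<rfloor>"
  define B where "B = N - A"
  define P where "P = A + B + 2 * G"
  let ?S = "time_share S1 S2 A B G"
  have "u \<le> 1" "v = 1 - u" using \<open>0 \<le> v\<close> \<open>u + v = 1\<close> by simp_all
  then have AN: "A \<le> N" and A: "\<bar>real A - u * N\<bar> \<le> 1" and B: "\<bar>real B - v * N\<bar> \<le> 1"
    using floor_mult_nat_approx[OF \<open>0 \<le> u\<close>, of N] by (simp_all add: A_def B_def)
  have P: "P = N + 2 * G" "P > 0" using AN by (simp_all add: P_def B_def N_def)
  have tendsto: "avg_success I D ?S l \<longlonglongrightarrow> real (success_count I D ?S l P) / P" for l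
    using P(2) time_share_periodic[of S1 S2 A B G] unfolding P_def
    by (intro periodic_schedule_avg_success_tendsto) auto
  then have "rate_exists I D ?S" by (auto simp: rate_exists_def convergent_def)
  moreover have "w l - \<delta> \<le> rate_vector I D ?S $ l" for l
  proof -
    have "0 \<le> real G * \<delta>" using \<open>\<delta> > 0\<close> by simp
    have "real P * (w l - \<delta>) = N * w l - \<delta> * N + 2 * G * w l - 2 * G * \<delta>"
      by (simp add: P(1) algebra_simps)
    also have "\<dots> \<le> N * w l - E l + 2 * G * \<bar>w l\<bar>"
      using E_le[of l] \<open>0 \<le> real G * \<delta>\<close> mult_left_mono[OF abs_ge_self[of "w l"], of "2 * G"]
      by linarith
    also have "\<dots> \<le> real A * c1 l - K1 l + (real B * c2 l - K2 l)"
      using mult_lower_bound_of_approx[OF A, of "c1 l"] mult_lower_bound_of_approx[OF B, of "c2 l"]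
      by (simp add: w_def E_def algebra_simps)
    also have "\<dots> \<le> real (success_count I D S1 l A + success_count I D S2 l B)"
      using S1[of A l] S2[of B l] by simp
    also have "\<dots> \<le> real (success_count I D ?S l P)"
      unfolding P_def by (rule of_nat_mono[OF success_count_time_share[OF delay]])
    finally show ?thesis
      using limI[OF tendsto] P(2) by (simp add: rate_vector_def pos_le_divide_eq mult.commute)
  qed
  ultimately show ?thesis using that by (simp add: w_def)
qed

lemma achievable_convex_combination:
  fixes R1 R2 :: "real ^ 'l::finite"
  assumes R1: "achievable I D R1" and R2: "achievable I D R2"
    and "0 \<le> u" "0 \<le> v" "u + v = 1"
  shows "achievable I D (u *\<^sub>R R1 + v *\<^sub>R R2)"
  unfolding achievable_def
proof (intro conjI allI impI)
  show "0 \<le> (u *\<^sub>R R1 + v *\<^sub>R R2) $ l" for l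
    using R1 R2 \<open>0 \<le> u\<close> \<open>0 \<le> v\<close> by (simp add: achievable_def)
  fix \<epsilon> :: real assume "\<epsilon> > 0"
  define \<delta> where "\<delta> = \<epsilon> / 3"
  have "\<delta> > 0" using \<open>\<epsilon> > 0\<close> by (simp add: \<delta>_def)
  obtain S1 where S1: "rate_exists I D S1" "\<And>l. R1 $ l - \<delta> \<le> rate_vector I D S1 $ l"
    using R1 \<open>\<delta> > 0\<close> by (auto simp: achievable_def)
  obtain S2 where S2: "rate_exists I D S2" "\<And>l. R2 $ l - \<delta> \<le> rate_vector I D S2 $ l"
    using R2 \<open>\<delta> > 0\<close> by (auto simp: achievable_def)
  have "R1 $ l - 2 * \<delta> < rate_vector I D S1 $ l" for l
    using S1(2)[of l] \<open>\<delta> > 0\<close> by linarith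
  then obtain K1 where K1: "\<And>l T. real T * (R1 $ l - 2 * \<delta>) - K1 l \<le> real (success_count I D S1 l T)"
    by (rule rate_exists_linear_lower_bound[OF S1(1), where c="\<lambda>l. R1 $ l - 2 * \<delta>"]) blast
  have "R2 $ l - 2 * \<delta> < rate_vector I D S2 $ l" for l
    using S2(2)[of l] \<open>\<delta> > 0\<close> by linarith
  then obtain K2 where K2: "\<And>l T. real T * (R2 $ l - 2 * \<delta>) - K2 l \<le> real (success_count I D S2 l T)"
    by (rule rate_exists_linear_lower_bound[OF S2(1), where c="\<lambda>l. R2 $ l - 2 * \<delta>"]) blast
  obtain G where "\<And>l l'. \<bar>D l l'\<bar> \<le> int G"
    using finite_delays_bounded by blast
  then obtain A B where
    "rate_exists I D (time_share S1 S2 A B G)"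
    "\<And>l. u * (R1 $ l - 2 * \<delta>) + v * (R2 $ l - 2 * \<delta>) - \<delta>
       \<le> rate_vector I D (time_share S1 S2 A B G) $ l"
    using time_share_rate_lower_bound[OF _ K1 K2 \<open>0 \<le> u\<close> \<open>0 \<le> v\<close> \<open>u + v = 1\<close> \<open>\<delta> > 0\<close>]
    by blast
  moreover have "u * (R1 $ l - 2 * \<delta>) + v * (R2 $ l - 2 * \<delta>) - \<delta>
      = (u *\<^sub>R R1 + v *\<^sub>R R2) $ l - \<epsilon>" for l
  proof -
    have "u * (R1 $ l - 2 * \<delta>) + v * (R2 $ l - 2 * \<delta>) - \<delta>
        = u * R1 $ l + v * R2 $ l - (u + v) * (2 * \<delta>) - \<delta>"
      by (simp add: algebra_simps)
    then show ?thesis using \<open>u + v = 1\<close> by (simp add: \<delta>_def)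
  qed
  ultimately show "\<exists>S. rate_exists I D S \<and> (\<forall>l. (u *\<^sub>R R1 + v *\<^sub>R R2) $ l - \<epsilon> \<le> rate_vector I D S $ l)"
    by metis
qed

theorem lemma1:
  fixes I :: "'l::finite \<Rightarrow> 'l set set" and D :: "'l \<Rightarrow> 'l \<Rightarrow> int"
  assumes "network I"
  shows "convex (rate_region I D)"
  by (rule convexI) (auto simp: rate_region_def intro: achievable_convex_combination)

end
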